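(* Let $\varphi(z)=Az+b$ be such that $C_\varphi$ is bounded on $\mathcal F(\mathbb C^d)$. Then there exist $S\in\mathbb C^{d\times d}$ and $v\in\mathbb C^d$ such that $C_\varphi$ is similar (via an invertible bounded operator on $\mathcal F(\mathbb C^d)$) to $C_{Sz+v}$, where $S=\begin{pmatrix}T&0\\0&U\end{pmatrix}$, $T\in\mathbb C^{p\times p}$ is upper triangular with diagonal consisting of all eigenvalues of $A$ of modulus $<1$ (with algebraic multiplicity), $U\in\mathbb C^{(d-p)\times(d-p)}$ is a diagonal unitary matrix whose diagonal consists of the eigenvalues of $A$ of modulus $1$, and $v\in\mathbb C^p\times\{0\}^{d-p}$.
   Context: $\mathcal F(\mathbb C^d)$ is the Fock space of entire functions $f$ on $\mathbb C^d$ with $\|f\|^2=(2\pi)^{-d}\int_{\mathbb C^d}|f(z)|^2e^{-|z|^2/2}\,dA(z)<\infty$ ($dA$ Lebesgue measure, $\langle z,w\rangle=\sum_j z_j\overline{w_j}$). $C_\varphi f=f\circ\varphi$. It is known that $C_\varphi$ is bounded iff $\varphi(z)=Az+b$ with $\|A\|\le1$ and $\langle Av,b\rangle=0$ whenever $|Av|=|v|$. *)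

theory Defs
  imports "HOL-Analysis.Analysis" "HOL-Computational_Algebra.Polynomial"
begin

(* Entire functions on C^d: complex (Frechet) differentiable everywhere, with
   complex-linear derivative h \<mapsto> \<Sum>_i g_i h_i. *)
definition entire_fun :: "(complex^'n::finite \<Rightarrow> complex) \<Rightarrow> bool" where
  "entire_fun f \<longleftrightarrow> (\<forall>z. \<exists>g::complex^'n.
      (f has_derivative (\<lambda>h. \<Sum>i\<in>UNIV. g$i * h$i)) (at z))"

definition fock :: "(complex^'n::finite \<Rightarrow> complex) set" where
  "fock = {f. entire_fun f \<and>
      integrable lborel (\<lambda>z. (cmod (f z))^2 * exp (- ((norm z)^2 / 2)))}"

definition fock_norm :: "(complex^'n::finite \<Rightarrow> complex) \<Rightarrow> real" where
  "fock_norm f = sqrt ((1 / (2*pi)) ^ CARD('n) *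
      (\<integral>z. (cmod (f z))^2 * exp (- ((norm z)^2 / 2)) \<partial>lborel))"

definition bounded_fock_op ::
  "((complex^'n::finite \<Rightarrow> complex) \<Rightarrow> (complex^'n \<Rightarrow> complex)) \<Rightarrow> bool" where
  "bounded_fock_op T \<longleftrightarrow>
     (\<forall>f\<in>fock. T f \<in> fock) \<and>
     (\<forall>f\<in>fock. \<forall>g\<in>fock. T (\<lambda>z. f z + g z) = (\<lambda>z. T f z + T g z)) \<and>
     (\<forall>c. \<forall>f\<in>fock. T (\<lambda>z. c * f z) = (\<lambda>z. c * T f z)) \<and>
     (\<exists>K. \<forall>f\<in>fock. fock_norm (T f) \<le> K * fock_norm f)"

definition comp_op ::
  "(complex^'n \<Rightarrow> complex^'n) \<Rightarrow> (complex^'n \<Rightarrow> complex) \<Rightarrow> (complex^'n \<Rightarrow> complex)" where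
  "comp_op \<phi> f = f \<circ> \<phi>"

definition charpoly :: "complex^'n::finite^'n \<Rightarrow> complex poly" where
  "charpoly A = det (\<chi> i j. (if i = j then [:0, 1:] else 0) - [:A$i$j:])"

(* algebraic multiplicity of c as eigenvalue of A (0 if not an eigenvalue) *)
definition alg_mult :: "complex^'n::finite^'n \<Rightarrow> complex \<Rightarrow> nat" where
  "alg_mult A c = order c (charpoly A)"

end

theory Submission
  imports Defs "HOL-Computational_Algebra.Fundamental_Theorem_Algebra" "HOL-Probability.Distributions"
begin

text \<open>Testing the boundedness of \<open>C\<^sub>\<phi>\<close> on the reproducing kernels \<open>z \<mapsto> exp (\<langle>z, w\<rangle> / 2)\<close>,
  whose Fock norms are \<open>exp (|w|\<^sup>2 / 4)\<close>, gives \<open>2 Re \<langle>b, w\<rangle> + |A\<^sup>* w|\<^sup>2 - |w|\<^sup>2 \<le> const\<close>;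
  scaling \<open>w\<close> shows that \<open>A\<^sup>*\<close>, hence \<open>A\<close>, is a contraction and that \<open>b \<perp> w\<close> whenever
  \<open>|A\<^sup>* w| = |w|\<close>. By Schur's theorem \<open>Q\<^sup>* A Q\<close> is upper triangular for some unitary \<open>Q\<close>; in a
  triangular contraction a unimodular diagonal entry is alone in its row and column, so after
  a permutation the unimodular eigenvalues form a diagonal block at the end, and the
  orthogonality of \<open>b\<close> makes the corresponding components of \<open>Q\<^sup>* b\<close> vanish. Composition with
  \<open>z \<mapsto> Q z\<close> is an invertible isometry of the Fock space, by rotation invariance of Lebesgue
  measure, and conjugates \<open>C\<^bsub>Az+b\<^esub>\<close> to \<open>C\<^bsub>Sz+v\<^esub>\<close> with \<open>S = Q\<^sup>* A Q\<close>, \<open>v = Q\<^sup>* b\<close>. Unitary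
  similarity preserves the characteristic polynomial, so the diagonal of \<open>S\<close> lists the
  eigenvalues of \<open>A\<close> with algebraic multiplicity.\<close>

section \<open>Complex inner product, unitary and contractive matrices\<close>

definition cinner :: "complex^'n::finite \<Rightarrow> complex^'n \<Rightarrow> complex" where
  "cinner x y = (\<Sum>i\<in>UNIV. x$i * cnj (y$i))"

definition conj_transpose :: "complex^'m::finite^'n::finite \<Rightarrow> complex^'n^'m" where
  "conj_transpose M = (\<chi> i j. cnj (M$j$i))"

definition unitary :: "complex^'n::finite^'n \<Rightarrow> bool" where
  "unitary Q \<longleftrightarrow> conj_transpose Q ** Q = mat 1"

definition contractive :: "complex^'n::finite^'m::finite \<Rightarrow> bool" where
  "contractive M \<longleftrightarrow> (\<forall>x. norm (M *v x) \<le> norm x)"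

lemma cinner_add_left: "cinner (x + y) z = cinner x z + cinner y z"
  by (simp add: cinner_def sum.distrib algebra_simps)

lemma cinner_diff_left: "cinner (x - y) z = cinner x z - cinner y z"
  by (simp add: cinner_def sum_subtractf algebra_simps)

lemma cinner_scale_left: "cinner (c *s x) z = c * cinner x z"
  by (simp add: cinner_def sum_distrib_left algebra_simps)

lemma cinner_scale_right: "cinner z (c *s x) = cnj c * cinner z x"
  by (simp add: cinner_def sum_distrib_left algebra_simps)

lemma cinner_scaleR_left: "cinner (r *\<^sub>R x) y = of_real r * cinner x y"
  by (simp add: cinner_def sum_distrib_left) (simp add: scaleR_conv_of_real mult.assoc)

lemma cinner_zero_left [simp]: "cinner 0 x = 0"
  by (simp add: cinner_def)

lemma cinner_sum_left: "cinner (\<Sum>k\<in>K. f k) z = (\<Sum>k\<in>K. cinner (f k) z)"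
  by (induct K rule: infinite_finite_induct) (auto simp: cinner_add_left)

lemma cinner_commute: "cinner y x = cnj (cinner x y)"
  by (simp add: cinner_def mult.commute)

lemma norm_vec_complex_power2: "(norm (x::complex^'n::finite))\<^sup>2 = (\<Sum>i\<in>UNIV. (cmod (x$i))\<^sup>2)"
  by (simp add: norm_vec_def L2_set_def sum_nonneg)

lemma cinner_self: "cinner x x = of_real ((norm x)\<^sup>2)"
  unfolding cinner_def norm_vec_complex_power2 of_real_sum
  by (intro sum.cong refl) (metis complex_norm_square)

lemma inner_vec_complex: "(x::complex^'n::finite) \<bullet> y = Re (cinner x y)"
  by (simp add: inner_vec_def cinner_def inner_complex_def)

lemma cinner_matrix_vector_mult: "cinner (M *v x) y = cinner x (conj_transpose M *v y)"
proof -
  have "cinner (M *v x) y = (\<Sum>i\<in>UNIV. \<Sum>j\<in>UNIV. M$i$j * x$j * cnj (y$i))"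
    unfolding cinner_def matrix_vector_mult_def by (simp add: sum_distrib_right)
  also have "\<dots> = (\<Sum>j\<in>UNIV. \<Sum>i\<in>UNIV. M$i$j * x$j * cnj (y$i))"
    by (rule sum.swap)
  also have "\<dots> = cinner x (conj_transpose M *v y)"
    unfolding cinner_def matrix_vector_mult_def conj_transpose_def
    by (simp add: sum_distrib_left mult_ac)
  finally show ?thesis .
qed

lemma conj_transpose_conj_transpose [simp]: "conj_transpose (conj_transpose M) = M"
  by (simp add: conj_transpose_def vec_eq_iff)

lemma conj_transpose_mult: "conj_transpose (M ** N) = conj_transpose N ** conj_transpose M"
  by (simp add: conj_transpose_def matrix_matrix_mult_def vec_eq_iff mult.commute)

lemma conj_transpose_component [simp]: "conj_transpose M $ i $ j = cnj (M$j$i)"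
  by (simp add: conj_transpose_def)

lemma norm_cinner_le: "cmod (cinner x y) \<le> norm x * norm y"
proof -
  have "cmod (cinner x y) \<le> (\<Sum>i\<in>UNIV. cmod (x$i) * cmod (y$i))"
    unfolding cinner_def by (rule order_trans[OF norm_sum]) (simp add: norm_mult)
  also have "\<dots> \<le> L2_set (\<lambda>i. cmod (x$i)) UNIV * L2_set (\<lambda>i. cmod (y$i)) UNIV"
    using L2_set_mult_ineq[of "\<lambda>i. cmod (x$i)" "\<lambda>i. cmod (y$i)" UNIV] by simp
  finally show ?thesis by (simp add: norm_vec_def)
qed

lemma norm_vector_smult_complex: "norm (c *s (x::complex^'n::finite)) = cmod c * norm x"
proof -
  have "(norm (c *s x))\<^sup>2 = (cmod c * norm x)\<^sup>2"
    by (simp add: norm_vec_complex_power2 norm_mult power_mult_distrib sum_distrib_left)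
  thus ?thesis by simp
qed

lemma norm_component_le: "cmod (x$i) \<le> norm (x::complex^'n::finite)"
proof -
  have "(cmod (x$i))\<^sup>2 \<le> (norm x)\<^sup>2"
    unfolding norm_vec_complex_power2 by (rule member_le_sum) auto
  thus ?thesis by (simp add: power2_le_iff_abs_le)
qed

lemma norm_axis_complex [simp]: "norm (axis i (1::complex)) = 1"
  by (simp add: norm_eq_sqrt_inner inner_axis_axis)

lemma matrix_vector_mult_axis: "(M::complex^'n::finite^'m::finite) *v axis i 1 = column i M"
  by (simp add: matrix_vector_mult_def axis_def column_def vec_eq_iff if_distrib cong: if_cong)

lemma cinner_axis: "cinner x (axis i 1) = x$i"
  by (simp add: cinner_def axis_def if_distrib cong: if_cong)

lemma conj_transpose_similar_component:
  "(conj_transpose Q ** M ** Q)$i$j = cinner (M *v column j Q) (column i Q)"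
proof -
  have "(conj_transpose Q ** M ** Q)$i$j = (\<Sum>r\<in>UNIV. \<Sum>s\<in>UNIV. cnj (Q$s$i) * M$s$r * Q$r$j)"
    by (simp add: matrix_matrix_mult_def sum_distrib_right)
  also have "\<dots> = (\<Sum>s\<in>UNIV. \<Sum>r\<in>UNIV. cnj (Q$s$i) * M$s$r * Q$r$j)"
    by (rule sum.swap)
  also have "\<dots> = cinner (M *v column j Q) (column i Q)"
    by (simp add: cinner_def matrix_vector_mult_def column_def sum_distrib_right
        sum_distrib_left mult_ac)
  finally show ?thesis .
qed

lemma unitary_right_inverse: "unitary Q \<Longrightarrow> Q ** conj_transpose Q = mat 1"
  unfolding unitary_def by (rule matrix_left_right_inverse[THEN iffD1])

lemma unitary_conj_transpose: "unitary Q \<Longrightarrow> unitary (conj_transpose Q)"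
  unfolding unitary_def by (simp add: unitary_right_inverse[unfolded unitary_def])

lemma unitary_mult: "unitary Q \<Longrightarrow> unitary R \<Longrightarrow> unitary (Q ** R)"
  unfolding unitary_def conj_transpose_mult
  by (metis matrix_mul_assoc matrix_mul_lid)

lemma norm_unitary_mult:
  assumes "unitary Q" shows "norm (Q *v x) = norm x"
proof -
  have "cinner (Q *v x) (Q *v x) = cinner x x"
    using assms by (simp add: unitary_def cinner_matrix_vector_mult matrix_vector_mul_assoc)
  thus ?thesis
    unfolding cinner_self of_real_eq_iff by simp
qed

lemma contractive_conj_transpose:
  assumes "contractive M"
  shows "contractive (conj_transpose M)"
  unfolding contractive_def
proof
  fix x
  let ?y = "conj_transpose M *v x"
  have "(norm ?y)\<^sup>2 = Re (cinner (M *v ?y) x)"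
    by (simp add: cinner_self cinner_matrix_vector_mult)
  also have "\<dots> \<le> norm (M *v ?y) * norm x"
    by (rule order_trans[OF complex_Re_le_cmod norm_cinner_le])
  also have "\<dots> \<le> norm ?y * norm x"
    using assms by (intro mult_right_mono) (auto simp: contractive_def)
  finally show "norm ?y \<le> norm x"
    by (cases "norm ?y = 0") (auto simp: power2_eq_square)
qed

lemma contractive_unitary_similar:
  assumes "contractive A" "unitary Q"
  shows "contractive (conj_transpose Q ** A ** Q)"
  unfolding contractive_def
proof
  fix x
  have "(conj_transpose Q ** A ** Q) *v x = conj_transpose Q *v (A *v (Q *v x))"
    by (simp add: matrix_vector_mul_assoc matrix_mul_assoc)
  then have "norm ((conj_transpose Q ** A ** Q) *v x) = norm (A *v (Q *v x))"
    by (simp add: norm_unitary_mult[OF unitary_conj_transpose[OF assms(2)]])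
  also have "\<dots> \<le> norm x"
    using assms by (metis contractive_def norm_unitary_mult)
  finally show "norm ((conj_transpose Q ** A ** Q) *v x) \<le> norm x" .
qed

lemma contractive_norm_column_le:
  assumes "contractive T"
  shows "norm (column i T) \<le> 1"
  using assms norm_axis_complex[of i] unfolding contractive_def matrix_vector_mult_axis[symmetric]
  by metis

lemma contractive_diagonal_le:
  assumes "contractive T"
  shows "cmod (T$i$i) \<le> 1"
  using norm_component_le[of "column i T" i] contractive_norm_column_le[OF assms, of i]
  by (simp add: column_def)

text \<open>A unimodular diagonal entry of a contraction already exhausts the norm of its column.\<close>

lemma contractive_unimodular_column:
  fixes T :: "complex^'n::finite^'n"
  assumes "contractive T" and diag: "cmod (T$i$i) = 1" and "j \<noteq> i"
  shows "T$j$i = 0"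
proof -
  have "(norm (column i T))\<^sup>2 \<le> 1"
    using contractive_norm_column_le[OF assms(1)] by (simp add: power_le_one)
  moreover have "(norm (column i T))\<^sup>2 = (cmod (T$i$i))\<^sup>2 + (\<Sum>k\<in>UNIV-{i}. (cmod (T$k$i))\<^sup>2)"
    unfolding norm_vec_complex_power2 by (subst sum.remove[of _ i]) (auto simp: column_def)
  ultimately have "(\<Sum>k\<in>UNIV-{i}. (cmod (T$k$i))\<^sup>2) = 0"
    using diag by (simp add: sum_nonneg antisym)
  then show ?thesis
    using \<open>j \<noteq> i\<close> by (subst (asm) sum_nonneg_eq_0_iff) auto
qed

lemma contractive_unimodular_diagonal:
  assumes "contractive T" "cmod (T$i$i) = 1" "j \<noteq> i"
  shows "T$j$i = 0" "T$i$j = 0"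
proof -
  show "T$j$i = 0"
    using assms by (rule contractive_unimodular_column)
  have "conj_transpose T $ j $ i = 0"
    by (rule contractive_unimodular_column[OF contractive_conj_transpose[OF assms(1)]])
      (simp_all add: assms)
  then show "T$i$j = 0"
    by simp
qed

lemma contractive_unimodular_norm_column:
  assumes "contractive T" "cmod (T$i$i) = 1"
  shows "norm (column i T) = 1"
proof (rule antisym)
  show "norm (column i T) \<le> 1"
    using assms(1) by (rule contractive_norm_column_le)
  show "1 \<le> norm (column i T)"
    using assms(2) norm_component_le[of "column i T" i] by (simp add: column_def)
qed

section \<open>Eigenvectors and Schur triangularisation\<close>

lemma ex_nontrivial_vanishing_combination:
  fixes f :: "nat \<Rightarrow> 'a::field^'n::finite"
  shows "\<exists>c. (\<exists>k\<le>CARD('n). c k \<noteq> 0) \<and> (\<Sum>k\<le>CARD('n). c k *s f k) = 0"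
proof (cases "inj_on f {..CARD('n)}")
  case False
  then obtain i j where ij: "i \<le> CARD('n)" "j \<le> CARD('n)" "i \<noteq> j" "f i = f j"
    unfolding inj_on_def by auto
  define c where "c = (\<lambda>k. if k = i then 1 else if k = j then -1 else (0::'a))"
  have "(\<Sum>k\<le>CARD('n). c k *s f k) = (\<Sum>k\<in>{i,j}. c k *s f k)"
    by (rule sum.mono_neutral_right) (use ij in \<open>auto simp: c_def\<close>)
  also have "\<dots> = 0"
    using ij by (simp add: c_def)
  finally show ?thesis
    using ij by (intro exI[of _ c]) (auto simp: c_def)
next
  case True
  let ?S = "f ` {..CARD('n)}"
  have "vec.dim ?S < card ?S"
    using vec.dim_subset_UNIV[of ?S] True by (simp add: card_image vec.dimension_def card_cart_basis)
  then have "vec.dependent ?S"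
    by (rule vec.dependent_biggerset_general)
  then obtain u where u: "\<exists>v\<in>?S. u v \<noteq> 0" "(\<Sum>v\<in>?S. u v *s v) = 0"
    by (auto simp: vec.dependent_finite)
  have "(\<Sum>k\<le>CARD('n). u (f k) *s f k) = 0"
    using u(2) by (simp add: sum.reindex[OF True])
  with u(1) show ?thesis
    by (intro exI[of _ "u \<circ> f"]) auto
qed

definition poly_apply :: "'a::field poly \<Rightarrow> ('a^'n::finite \<Rightarrow> 'a^'n) \<Rightarrow> 'a^'n \<Rightarrow> 'a^'n" where
  "poly_apply p B x = (\<Sum>k\<le>degree p. coeff p k *s (B ^^ k) x)"

lemma poly_apply_eq_sum:
  assumes "degree p \<le> n"
  shows "poly_apply p B x = (\<Sum>k\<le>n. coeff p k *s (B ^^ k) x)"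
  unfolding poly_apply_def
  by (rule sum.mono_neutral_left) (use assms in \<open>auto simp: coeff_eq_0\<close>)

lemma poly_apply_add: "poly_apply (p + q) B x = poly_apply p B x + poly_apply q B x"
proof -
  let ?n = "max (degree p) (degree q)"
  have "degree (p + q) \<le> ?n"
    by (rule degree_add_le) auto
  then show ?thesis
    by (simp add: poly_apply_eq_sum[of _ ?n] sum.distrib)
qed

lemma poly_apply_smult: "poly_apply (smult a p) B x = a *s poly_apply p B x"
  by (simp add: poly_apply_eq_sum[of "smult a p" "degree p"] poly_apply_def
      vec.scale_sum_right)

lemma poly_apply_pCons_0:
  assumes "Vector_Spaces.linear (*s) (*s) B"
  shows "poly_apply (pCons 0 p) B x = B (poly_apply p B x)"
proof -
  have "poly_apply (pCons 0 p) B x = (\<Sum>k\<le>Suc (degree p). coeff (pCons 0 p) k *s (B ^^ k) x)"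
    by (rule poly_apply_eq_sum) (simp add: degree_pCons_le)
  also have "\<dots> = (\<Sum>k\<le>degree p. coeff p k *s (B ^^ Suc k) x)"
    by (subst sum.atMost_Suc_shift) simp
  also have "\<dots> = B (poly_apply p B x)"
    by (simp add: poly_apply_def assms vec.linear_sum vec.linear_scale)
  finally show ?thesis .
qed

lemma ex_minimal_annihilating_poly:
  fixes B :: "'a::field^'n::finite \<Rightarrow> 'a^'n"
  obtains q where "q \<noteq> 0" "poly_apply q B w = 0"
    "\<And>q'. q' \<noteq> 0 \<Longrightarrow> poly_apply q' B w = 0 \<Longrightarrow> degree q \<le> degree q'"
proof -
  obtain c where c: "\<exists>k\<le>CARD('n). c k \<noteq> 0" "(\<Sum>k\<le>CARD('n). c k *s (B ^^ k) w) = 0"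
    using ex_nontrivial_vanishing_combination[of "\<lambda>k. (B ^^ k) w"] by blast
  define p where "p = (\<Sum>k\<le>CARD('n). monom (c k) k)"
  have coeff_p: "coeff p k = (if k \<le> CARD('n) then c k else 0)" for k
    unfolding p_def by (simp add: coeff_sum)
  have "degree p \<le> CARD('n)"
    by (rule degree_le) (simp add: coeff_p)
  then have "poly_apply p B w = 0"
    using c(2) by (simp add: poly_apply_eq_sum[of p "CARD('n)"] coeff_p)
  moreover have "p \<noteq> 0"
    using c(1) coeff_p by (metis coeff_0)
  ultimately show ?thesis
    using ex_has_least_nat[of "\<lambda>q. q \<noteq> 0 \<and> poly_apply q B w = 0" p degree] that by blast
qed

text \<open>The determinant-free argument: a nonzero polynomial of least degree annihilating \<open>w\<close> has
  a root \<open>r\<close>, and removing the factor \<open>X - r\<close> leaves a polynomial that maps \<open>w\<close> to an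
  eigenvector.\<close>

lemma ex_eigenvector_in_invariant_subspace:
  fixes B :: "complex^'n::finite \<Rightarrow> complex^'n"
  assumes lin: "Vector_Spaces.linear (*s) (*s) B" and W: "vec.subspace W"
    and inv: "\<And>x. x \<in> W \<Longrightarrow> B x \<in> W" and w: "w \<in> W" "w \<noteq> 0"
  obtains x l where "x \<in> W" "x \<noteq> 0" "B x = l *s x"
proof -
  have poly_apply_in: "poly_apply p B w \<in> W" for p
  proof -
    have "(B ^^ k) w \<in> W" for k
      by (induct k) (auto intro: inv w)
    then show ?thesis
      unfolding poly_apply_def by (simp add: vec.subspace_sum[OF W] vec.subspace_scale[OF W])
  qed
  obtain q where q: "q \<noteq> 0" "poly_apply q B w = 0"
    and least: "\<And>q'. q' \<noteq> 0 \<Longrightarrow> poly_apply q' B w = 0 \<Longrightarrow> degree q \<le> degree q'"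
    using ex_minimal_annihilating_poly[where B = B and w = w] by blast
  have "degree q \<noteq> 0"
  proof
    assume "degree q = 0"
    then have "poly_apply q B w = coeff q 0 *s w" and "coeff q 0 \<noteq> 0"
      using q(1) by (simp add: poly_apply_def, metis leading_coeff_0_iff)
    with q(2) w(2) show False
      by simp
  qed
  then have "\<not> constant (poly q)"
    by (simp add: constant_degree)
  then obtain r where "poly q r = 0"
    using fundamental_theorem_of_algebra by blast
  then obtain q' where q': "q = [:-r, 1:] * q'"
    by (metis dvdE poly_eq_0_iff_dvd)
  have "q' \<noteq> 0"
    using q(1) q' by auto
  moreover have "degree q = Suc (degree q')"
    unfolding q' using \<open>q' \<noteq> 0\<close> by (subst degree_mult_eq) auto
  ultimately have x: "poly_apply q' B w \<noteq> 0"
    using least[of q'] by auto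
  have "[:-r, 1:] * q' = smult (-r) q' + pCons 0 q'"
    by simp
  then have "(-r) *s poly_apply q' B w + B (poly_apply q' B w) = 0"
    using q(2) unfolding q' by (simp only: poly_apply_add poly_apply_smult poly_apply_pCons_0[OF lin])
  then have "B (poly_apply q' B w) = r *s poly_apply q' B w"
    by (simp add: vec_eq_iff add_eq_0_iff)
  with x poly_apply_in that show ?thesis
    by blast
qed

definition orthonormal_upto :: "nat \<Rightarrow> (nat \<Rightarrow> complex^'n::finite) \<Rightarrow> bool" where
  "orthonormal_upto k q \<longleftrightarrow> (\<forall>i<k. \<forall>j<k. cinner (q i) (q j) = (if i = j then 1 else 0))"

definition proj_complement :: "nat \<Rightarrow> (nat \<Rightarrow> complex^'n::finite) \<Rightarrow> complex^'n \<Rightarrow> complex^'n" where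
  "proj_complement k q x = x - (\<Sum>i<k. cinner x (q i) *s q i)"

lemma cinner_proj_complement:
  assumes "orthonormal_upto k q" "j < k"
  shows "cinner (proj_complement k q x) (q j) = 0"
proof -
  have "cinner (\<Sum>i<k. cinner x (q i) *s q i) (q j) = (\<Sum>i<k. cinner x (q i) * cinner (q i) (q j))"
    by (simp add: cinner_sum_left cinner_scale_left)
  also have "\<dots> = (\<Sum>i<k. if i = j then cinner x (q i) else 0)"
    using assms by (intro sum.cong refl) (auto simp: orthonormal_upto_def)
  also have "\<dots> = cinner x (q j)"
    using assms(2) by simp
  finally show ?thesis
    by (simp add: proj_complement_def cinner_diff_left)
qed

lemma linear_proj_complement: "Vector_Spaces.linear (*s) (*s) (proj_complement k q)"
  by unfold_locales
    (simp_all add: proj_complement_def cinner_add_left cinner_scale_left sum.distrib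
      vec.scale_sum_right vec.scale_right_diff_distrib)

lemma ex_orthogonal_to_orthonormal_upto:
  fixes q :: "nat \<Rightarrow> complex^'n::finite"
  assumes "orthonormal_upto k q" "k < CARD('n)"
  obtains x where "x \<noteq> 0" "\<And>i. i < k \<Longrightarrow> cinner x (q i) = 0"
proof (rule ccontr)
  assume "\<not> thesis"
  then have "x = (\<Sum>i<k. cinner x (q i) *s q i)" for x
    using that cinner_proj_complement[OF assms(1)] by (metis eq_iff_diff_eq_0 proj_complement_def)
  then have "UNIV \<subseteq> vec.span (q ` {..<k})"
    by (metis (no_types, lifting) image_eqI subsetI vec.span_base vec.span_scale
        vec.span_sum)
  then have "vec.dim (UNIV :: (complex^'n) set) \<le> card (q ` {..<k})"
    by (intro vec.dim_le_card) auto
  also have "\<dots> \<le> k"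
    using card_image_le[of "{..<k}" q] by simp
  finally show False
    using assms(2) by (simp add: card_cart_basis)
qed

text \<open>The compression of \<open>A\<close> to the orthogonal complement of \<open>q 0, \<dots>, q (k - 1)\<close> maps that
  complement into itself, so it has a unit eigenvector there.\<close>

lemma ex_unit_eigenvector_proj_complement:
  fixes A :: "complex^'n::finite^'n"
  assumes orth: "orthonormal_upto k q" and "k < CARD('n)"
  obtains y l where "cinner y y = 1" "\<And>i. i < k \<Longrightarrow> cinner y (q i) = 0"
    "proj_complement k q (A *v y) = l *s y"
proof -
  let ?W = "{x. \<forall>i<k. cinner x (q i) = 0}"
  let ?B = "\<lambda>x. proj_complement k q (A *v x)"
  have W: "vec.subspace ?W"
    by (simp add: vec.subspace_def cinner_add_left cinner_scale_left)
  have lin: "Vector_Spaces.linear (*s) (*s) ?B"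
    using Vector_Spaces.linear_compose[OF matrix_vector_mul_linear_gen linear_proj_complement]
    by (simp add: o_def)
  obtain w where "w \<noteq> 0" "\<And>i. i < k \<Longrightarrow> cinner w (q i) = 0"
    using ex_orthogonal_to_orthonormal_upto[OF assms] by blast
  then obtain x l where x: "x \<in> ?W" "x \<noteq> 0" "?B x = l *s x"
    by (rule_tac ex_eigenvector_in_invariant_subspace[OF lin W])
      (simp_all add: cinner_proj_complement[OF orth])
  define y where "y = complex_of_real (1 / norm x) *s x"
  have "norm y = 1"
    using x(2) by (simp add: y_def norm_vector_smult_complex norm_divide)
  then have "cinner y y = 1"
    by (simp add: cinner_self)
  moreover have "cinner y (q i) = 0" if "i < k" for i
    using x(1) that by (simp add: y_def cinner_scale_left)
  moreover have "?B y = complex_of_real (1 / norm x) *s ?B x"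
    unfolding y_def by (rule vec.linear_scale[OF lin])
  then have "?B y = l *s y"
    using x(3) by (simp add: y_def mult.commute)
  ultimately show ?thesis
    by (rule that)
qed

lemma schur_flag:
  fixes A :: "complex^'n::finite^'n"
  assumes "k \<le> CARD('n)"
  shows "\<exists>q. orthonormal_upto k q \<and> (\<forall>j<k. A *v q j = (\<Sum>i\<le>j. cinner (A *v q j) (q i) *s q i))"
  using assms
proof (induct k)
  case 0
  show ?case by (simp add: orthonormal_upto_def)
next
  case (Suc k)
  then obtain q where orth: "orthonormal_upto k q"
    and flag: "\<forall>j<k. A *v q j = (\<Sum>i\<le>j. cinner (A *v q j) (q i) *s q i)"
    by auto
  obtain y l where y_norm: "cinner y y = 1" and y_orth: "\<And>i. i < k \<Longrightarrow> cinner y (q i) = 0"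
    and By: "proj_complement k q (A *v y) = l *s y"
    using ex_unit_eigenvector_proj_complement[OF orth] Suc(2) by (metis Suc_le_lessD)
  have y_orth': "cinner (q i) y = 0" if "i < k" for i
    using y_orth[OF that] by (simp add: cinner_commute[of "q i"])
  define c where "c i = cinner (A *v y) (q i)" for i
  have Ay: "A *v y = l *s y + (\<Sum>i<k. c i *s q i)"
    using By by (simp add: proj_complement_def c_def algebra_simps)
  have "cinner (A *v y) y = l"
    by (subst Ay) (simp add: cinner_add_left cinner_scale_left cinner_sum_left y_orth' y_norm)
  define q' where "q' = q(k := y)"
  have "orthonormal_upto (Suc k) q'"
    using orth y_norm y_orth y_orth'
    by (auto simp: orthonormal_upto_def q'_def less_Suc_eq)
  moreover have "A *v q' j = (\<Sum>i\<le>j. cinner (A *v q' j) (q' i) *s q' i)" if "j < Suc k" for j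
  proof (cases "j = k")
    case True
    have "(\<Sum>i<k. cinner (A *v q' j) (q' i) *s q' i) = (\<Sum>i<k. c i *s q i)"
      using True by (intro sum.cong) (auto simp: q'_def c_def)
    moreover have "A *v q' j = l *s y + (\<Sum>i<k. c i *s q i)"
      using True Ay by (simp add: q'_def)
    ultimately show ?thesis
      using True \<open>cinner (A *v y) y = l\<close>
      by (simp add: q'_def add.commute flip: lessThan_Suc_atMost)
  next
    case False
    with that have "j < k"
      by simp
    have "A *v q' j = A *v q j"
      using False by (simp add: q'_def)
    also have "\<dots> = (\<Sum>i\<le>j. cinner (A *v q j) (q i) *s q i)"
      using flag \<open>j < k\<close> by blast
    also have "\<dots> = (\<Sum>i\<le>j. cinner (A *v q' j) (q' i) *s q' i)"
      using \<open>j < k\<close> by (intro sum.cong) (auto simp: q'_def)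
    finally show ?thesis .
  qed
  ultimately show ?case
    by blast
qed

lemma schur_flag_triangular:
  assumes orth: "orthonormal_upto k q"
    and flag: "\<forall>j<k. A *v q j = (\<Sum>i\<le>j. cinner (A *v q j) (q i) *s q i)"
    and "j < i" "i < k"
  shows "cinner (A *v q j) (q i) = 0"
proof -
  have "A *v q j = (\<Sum>i'\<le>j. cinner (A *v q j) (q i') *s q i')"
    using flag assms(3,4) less_trans by blast
  then have "cinner (A *v q j) (q i) = cinner (\<Sum>i'\<le>j. cinner (A *v q j) (q i') *s q i') (q i)"
    by (rule arg_cong)
  also have "\<dots> = (\<Sum>i'\<le>j. cinner (A *v q j) (q i') * cinner (q i') (q i))"
    by (simp only: cinner_sum_left cinner_scale_left)
  also have "\<dots> = 0"
    using orth assms(3,4) by (intro sum.neutral) (auto simp: orthonormal_upto_def)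
  finally show ?thesis .
qed

lemma ex_strict_mono_bij_betw:
  fixes A :: "'a::linorder set" and B :: "'b::linorder set"
  assumes "finite A" "finite B" "card A = card B"
  shows "\<exists>f. bij_betw f A B \<and> strict_mono_on A f"
  using assms
proof (induct "card A" arbitrary: A B)
  case 0
  then show ?case
    by (auto simp: strict_mono_on_def bij_betw_def)
next
  case (Suc n)
  define a b where "a = Max A" and "b = Max B"
  have "A \<noteq> {}" "B \<noteq> {}"
    using Suc.hyps(2) Suc.prems by auto
  then have ab: "a \<in> A" "b \<in> B"
    using Suc.prems by (simp_all add: a_def b_def)
  have "card (A - {a}) = n" "card (B - {b}) = n"
    using Suc.hyps(2) Suc.prems ab by auto
  then obtain f where f: "bij_betw f (A - {a}) (B - {b})" "strict_mono_on (A - {a}) f"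
    using Suc.hyps(1)[of "A - {a}" "B - {b}"] Suc.prems(1,2) by auto
  have f': "bij_betw (f(a := b)) (A - {a}) (B - {b})"
    using f(1) by (rule bij_betw_cong[THEN iffD1, rotated]) auto
  have "bij_betw (f(a := b)) (A - {a} \<union> {a}) (B - {b} \<union> {(f(a := b)) a})"
    by (rule notIn_Un_bij_betw[OF _ _ f']) auto
  then have "bij_betw (f(a := b)) A B"
    using ab by (simp add: insert_absorb)
  moreover have "strict_mono_on A (f(a := b))"
  proof (rule strict_mono_onI)
    fix x y assume xy: "x \<in> A" "y \<in> A" "x < y"
    have "y \<le> a"
      using Suc.prems(1) xy(2) by (simp add: a_def)
    then have "x \<noteq> a"
      using xy(3) by auto
    show "(f(a := b)) x < (f(a := b)) y"
    proof (cases "y = a")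
      case True
      have "f x \<in> B - {b}"
        using f(1) xy \<open>x \<noteq> a\<close> by (auto simp: bij_betw_def)
      then show ?thesis
        using True \<open>x \<noteq> a\<close> Suc.prems(2) by (auto simp: a_def b_def order.strict_iff_order)
    next
      case False
      then show ?thesis
        using f(2) xy \<open>x \<noteq> a\<close> by (auto simp: strict_mono_on_def)
    qed
  qed
  ultimately show ?case
    by blast
qed

definition upper_triangular :: "(('a::zero, 'n::{finite,linorder}) vec, 'n) vec \<Rightarrow> bool" where
  "upper_triangular S \<longleftrightarrow> (\<forall>i j. j < i \<longrightarrow> S$i$j = 0)"

lemma schur_decomposition:
  fixes A :: "((complex, 'n::{finite,linorder}) vec, 'n) vec"
  obtains Q where "unitary Q" "upper_triangular (conj_transpose Q ** A ** Q)"
proof -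
  obtain q where orth: "orthonormal_upto CARD('n) q"
    and flag: "\<forall>j<CARD('n). A *v q j = (\<Sum>i\<le>j. cinner (A *v q j) (q i) *s q i)"
    using schur_flag[of "CARD('n)" A] by auto
  obtain r :: "'n \<Rightarrow> nat" where r: "bij_betw r UNIV {..<CARD('n)}" "strict_mono_on UNIV r"
    using ex_strict_mono_bij_betw[of "UNIV :: 'n set" "{..<CARD('n)}"] by auto
  have r_less: "r i < CARD('n)" for i
    using r(1) by (auto simp: bij_betw_def)
  define Q where "Q = (\<chi> i c. q (r c) $ i)"
  have column_Q: "column c Q = q (r c)" for c
    by (simp add: Q_def column_def vec_eq_iff)
  have "conj_transpose Q ** Q = mat 1"
  proof -
    have "(conj_transpose Q ** Q)$i$j = cinner (q (r j)) (q (r i))" for i j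
      using conj_transpose_similar_component[of Q "mat 1" i j] by (simp add: column_Q)
    also have "cinner (q (r j)) (q (r i)) = (if i = j then 1 else 0)" for i j
      using orth r_less r(1) by (auto simp: orthonormal_upto_def bij_betw_def inj_eq)
    finally show ?thesis
      by (simp add: vec_eq_iff mat_def)
  qed
  moreover have "(conj_transpose Q ** A ** Q)$i$j = 0" if "j < i" for i j
    unfolding conj_transpose_similar_component column_Q
    using that r(2) r_less by (intro schur_flag_triangular[OF orth flag]) (simp_all add: strict_mono_onD)
  ultimately show ?thesis
    using that by (simp add: unitary_def upper_triangular_def)
qed

section \<open>Splitting off the unimodular part of a contraction\<close>

definition perm_matrix :: "('n::finite \<Rightarrow> 'n) \<Rightarrow> complex^'n^'n" where
  "perm_matrix \<sigma> = (\<chi> i j. if i = \<sigma> j then 1 else 0)"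

lemma column_perm_matrix: "column j (perm_matrix \<sigma>) = axis (\<sigma> j) 1"
  by (simp add: perm_matrix_def column_def axis_def vec_eq_iff)

lemma perm_matrix_similar_component:
  "(conj_transpose (perm_matrix \<sigma>) ** M ** perm_matrix \<sigma>)$i$j = M $ \<sigma> i $ \<sigma> j"
  by (simp add: conj_transpose_similar_component column_perm_matrix matrix_vector_mult_axis
      cinner_axis) (simp add: column_def)

lemma unitary_perm_matrix: "inj \<sigma> \<Longrightarrow> unitary (perm_matrix \<sigma>)"
  using perm_matrix_similar_component[of \<sigma> "mat 1", unfolded matrix_mul_rid]
  by (simp add: unitary_def vec_eq_iff mat_def inj_eq)

lemma ex_initial_segment:
  assumes "m \<le> CARD('n)"
  obtains P :: "'n::{finite,linorder} set" where "card P = m" "\<And>i j. i \<in> P \<Longrightarrow> j \<notin> P \<Longrightarrow> i < j"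
proof -
  obtain r :: "'n \<Rightarrow> nat" where r: "bij_betw r UNIV {..<CARD('n)}" "strict_mono_on UNIV r"
    using ex_strict_mono_bij_betw[of "UNIV :: 'n set" "{..<CARD('n)}"] by auto
  define P where "P = {i. r i < m}"
  have "r ` P = {..<m}"
  proof
    show "{..<m} \<subseteq> r ` P"
    proof
      fix k assume "k \<in> {..<m}"
      moreover have "k \<in> r ` UNIV"
        using calculation r(1) assms by (auto simp: bij_betw_def)
      ultimately show "k \<in> r ` P"
        by (auto simp: P_def)
    qed
  qed (auto simp: P_def)
  then have "card P = m"
    using r(1) by (metis card_image card_lessThan bij_betw_def inj_on_subset subset_UNIV)
  moreover have "i < j" if "i \<in> P" "j \<notin> P" for i j
    using r(2) that by (metis P_def mem_Collect_eq less_asym' linorder_neqE strict_mono_onD UNIV_I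
        order.strict_trans)
  ultimately show ?thesis
    by (rule that)
qed

lemma ex_perm_moving_set_to_end:
  fixes J :: "'n::{finite,linorder} set"
  obtains \<sigma> :: "'n \<Rightarrow> 'n" and P where "bij \<sigma>" "\<And>i j. i \<in> P \<Longrightarrow> j \<notin> P \<Longrightarrow> i < j"
    "\<And>i. \<sigma> i \<in> J \<longleftrightarrow> i \<notin> P" "strict_mono_on P \<sigma>"
proof -
  have card_le: "card (- J) \<le> CARD('n)" "card J \<le> CARD('n)"
    by (rule card_mono, auto)+
  obtain P :: "'n set" where P: "card P = card (- J)" "\<And>i j. i \<in> P \<Longrightarrow> j \<notin> P \<Longrightarrow> i < j"
    using ex_initial_segment[OF card_le(1)] by blast
  then obtain f where f: "bij_betw f P (- J)" "strict_mono_on P f"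
    using ex_strict_mono_bij_betw[of P "- J"] by auto
  have "card (- P) = card J"
    using P(1) card_le by (simp add: Compl_eq_Diff_UNIV card_Diff_subset)
  then obtain g where g: "bij_betw g (- P) J"
    using ex_strict_mono_bij_betw[of "- P" J] by auto
  define \<sigma> where "\<sigma> i = (if i \<in> P then f i else g i)" for i
  show ?thesis
  proof
    have "bij_betw \<sigma> P (- J)"
      using f(1) by (rule bij_betw_cong[THEN iffD1, rotated]) (simp add: \<sigma>_def)
    moreover have "bij_betw \<sigma> (- P) J"
      using g by (rule bij_betw_cong[THEN iffD1, rotated]) (simp add: \<sigma>_def)
    ultimately show "bij \<sigma>"
      using bij_betw_combine[of \<sigma> P "- J" "- P" J] by simp
    show "\<sigma> i \<in> J \<longleftrightarrow> i \<notin> P" for i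
      using f(1) g by (auto simp: \<sigma>_def bij_betw_def)
    show "strict_mono_on P \<sigma>"
      using f(2) by (simp add: strict_mono_on_def \<sigma>_def)
  qed (rule P(2))
qed

text \<open>Starting from a Schur form of the contraction \<open>A\<close>, the unimodular diagonal entries sit in
  rows and columns that vanish off the diagonal, so they can be permuted to the end without
  destroying triangularity.\<close>

lemma block_schur_decomposition:
  fixes A :: "((complex, 'n::{finite,linorder}) vec, 'n) vec"
  assumes "contractive A"
  obtains Q P where "unitary Q" "upper_triangular (conj_transpose Q ** A ** Q)"
    "\<And>i j. i \<in> P \<Longrightarrow> j \<notin> P \<Longrightarrow> i < j"
    "\<And>i. i \<notin> P \<longleftrightarrow> cmod ((conj_transpose Q ** A ** Q)$i$i) = 1"
proof -
  obtain Q0 where Q0: "unitary Q0" "upper_triangular (conj_transpose Q0 ** A ** Q0)"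
    by (rule schur_decomposition)
  define S0 where "S0 = conj_transpose Q0 ** A ** Q0"
  have S0: "contractive S0"
    unfolding S0_def using assms Q0(1) by (rule contractive_unitary_similar)
  obtain \<sigma> :: "'n \<Rightarrow> 'n" and P where \<sigma>: "bij \<sigma>" "\<And>i j. i \<in> P \<Longrightarrow> j \<notin> P \<Longrightarrow> i < j"
    "\<And>i. cmod (S0 $ \<sigma> i $ \<sigma> i) = 1 \<longleftrightarrow> i \<notin> P" "strict_mono_on P \<sigma>"
    using ex_perm_moving_set_to_end[of "{i. cmod (S0$i$i) = 1}"] by auto
  define Q where "Q = Q0 ** perm_matrix \<sigma>"
  have Q: "unitary Q"
    unfolding Q_def using Q0(1) \<sigma>(1) by (simp add: unitary_mult unitary_perm_matrix bij_is_inj)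
  have "conj_transpose Q ** A ** Q = conj_transpose (perm_matrix \<sigma>) ** S0 ** perm_matrix \<sigma>"
    by (simp add: Q_def S0_def conj_transpose_mult matrix_mul_assoc)
  then have S: "(conj_transpose Q ** A ** Q)$i$j = S0 $ \<sigma> i $ \<sigma> j" for i j
    by (simp add: perm_matrix_similar_component)
  have "(conj_transpose Q ** A ** Q)$i$j = 0" if "j < i" for i j
  proof (cases "i \<in> P \<and> j \<in> P")
    case True
    then have "\<sigma> j < \<sigma> i"
      using \<sigma>(4) that by (simp add: strict_mono_onD)
    then show ?thesis
      using Q0(2) by (simp add: S S0_def upper_triangular_def)
  next
    case False
    have "\<sigma> i \<noteq> \<sigma> j"
      using \<sigma>(1) that by (metis bij_is_inj inj_eq less_irrefl)
    then show ?thesis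
      using False contractive_unimodular_diagonal[OF S0] \<sigma>(3) by (metis S)
  qed
  then show ?thesis
    using that[OF Q] \<sigma>(2,3) by (simp add: upper_triangular_def S)
qed

lemma unitary_similar_translation_component:
  assumes Q: "unitary Q" and A: "contractive A"
    and b: "\<And>w. norm (conj_transpose A *v w) = norm w \<Longrightarrow> cinner b w = 0"
    and diag: "cmod ((conj_transpose Q ** A ** Q)$i$i) = 1"
  shows "(conj_transpose Q *v b)$i = 0"
proof -
  define w where "w = column i Q"
  define T where "T = conj_transpose (conj_transpose Q ** A ** Q)"
  have T: "contractive T"
    unfolding T_def using A Q by (intro contractive_conj_transpose contractive_unitary_similar)
  have "cmod (T$i$i) = 1"
    using diag by (simp add: T_def)
  have "conj_transpose A *v w = Q *v column i T"
    unfolding w_def matrix_vector_mult_axis[symmetric] using unitary_right_inverse[OF Q]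
    by (simp add: T_def conj_transpose_mult matrix_vector_mul_assoc matrix_mul_assoc)
  then have "norm (conj_transpose A *v w) = 1"
    using contractive_unimodular_norm_column[OF T \<open>cmod (T$i$i) = 1\<close>]
    by (simp add: norm_unitary_mult[OF Q])
  also have "1 = norm w"
    unfolding w_def matrix_vector_mult_axis[symmetric] by (simp add: norm_unitary_mult[OF Q])
  finally have "cinner b w = 0"
    by (rule b)
  moreover have "(conj_transpose Q *v b)$i = cinner b w"
    by (simp add: w_def cinner_def matrix_vector_mult_def column_def mult.commute)
  ultimately show ?thesis
    by simp
qed

section \<open>Characteristic polynomials\<close>

lemma poly_det: "poly (det M) x = det (map_matrix (\<lambda>p. poly p x) M)"
  by (simp add: det_def poly_sum poly_prod)

lemma poly_charpoly: "poly (charpoly A) x = det (mat x - A)"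
  unfolding charpoly_def poly_det
  by (rule arg_cong[where f = det]) (simp add: vec_eq_iff mat_def)

lemma mat_mult_component: "(mat x ** (M::'a::comm_ring_1^'n::finite^'m::finite))$i$j = x * M$i$j"
  by (simp add: matrix_matrix_mult_def mat_def if_distrib[of "\<lambda>a. a * _"] cong: if_cong)

lemma mult_mat_component: "((M::'a::comm_ring_1^'n::finite^'m::finite) ** mat x)$i$j = M$i$j * x"
  by (simp add: matrix_matrix_mult_def mat_def if_distrib[of "\<lambda>a. _ * a"] cong: if_cong)

lemma charpoly_similar:
  fixes A R Q :: "complex^'n::finite^'n"
  assumes "R ** Q = mat 1"
  shows "charpoly (R ** A ** Q) = charpoly A"
proof -
  have "det (mat x - R ** A ** Q) = det (mat x - A)" for x
  proof -
    have "mat x ** Q = Q ** mat x"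
      by (simp add: vec_eq_iff mat_mult_component mult_mat_component mult.commute)
    then have "R ** mat x ** Q = mat x"
      using assms by (metis matrix_mul_assoc matrix_mul_lid)
    moreover have "R ** (mat x - A) ** Q = R ** mat x ** Q - R ** A ** Q"
      by (simp add: matrix_matrix_mult_def vec_eq_iff sum_subtractf algebra_simps)
    ultimately have "mat x - R ** A ** Q = R ** (mat x - A) ** Q"
      by simp
    moreover have "det R * det Q = 1"
      using assms det_mul[of R Q] by simp
    ultimately show ?thesis
      by (simp add: det_mul)
  qed
  then show ?thesis
    by (simp add: poly_eq_poly_eq_iff[symmetric] poly_charpoly fun_eq_iff)
qed

lemma permutes_ex_less:
  fixes p :: "'n::{finite,linorder} \<Rightarrow> 'n"
  assumes p: "p permutes UNIV" and "p \<noteq> id"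
  shows "\<exists>i. p i < i"
proof (rule ccontr)
  assume "\<not> ?thesis"
  then have ge: "i \<le> p i" for i
    by (simp add: not_less)
  let ?D = "{i. p i \<noteq> i}"
  have "?D \<noteq> {}"
    using \<open>p \<noteq> id\<close> by (auto simp: fun_eq_iff)
  then have m: "Max ?D \<in> ?D"
    by (intro Max_in) auto
  then have "Max ?D < p (Max ?D)"
    using ge[of "Max ?D"] by auto
  moreover have "p (Max ?D) \<in> ?D"
    using m permutes_inj[OF p] by (auto simp: inj_eq)
  then have "p (Max ?D) \<le> Max ?D"
    by (intro Max_ge) auto
  ultimately show False
    by simp
qed

lemma det_upper_triangular:
  fixes S :: "(('a::comm_ring_1, 'n::{finite,linorder}) vec, 'n) vec"
  assumes "upper_triangular S"
  shows "det S = (\<Prod>i\<in>UNIV. S$i$i)"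
proof -
  have "det S = (\<Sum>p\<in>{id}. of_int (sign p) * (\<Prod>i\<in>UNIV. S $ i $ p i))"
    unfolding det_def
  proof (rule sum.mono_neutral_right)
    show "\<forall>p\<in>{p. p permutes UNIV} - {id}. of_int (sign p) * (\<Prod>i\<in>UNIV. S $ i $ p i) = 0"
    proof
      fix p :: "'n \<Rightarrow> 'n" assume "p \<in> {p. p permutes UNIV} - {id}"
      then obtain i where "p i < i"
        using permutes_ex_less by blast
      then have "S $ i $ p i = 0"
        using assms by (simp add: upper_triangular_def)
      then have "(\<Prod>i\<in>UNIV. S $ i $ p i) = 0"
        by (intro prod_zero) auto
      then show "of_int (sign p) * (\<Prod>i\<in>UNIV. S $ i $ p i) = 0"
        by simp
    qed
  qed (simp_all add: finite_permutations)
  then show ?thesis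
    by simp
qed

lemma order_prod_linear_factors:
  fixes s :: "'i \<Rightarrow> complex"
  assumes "finite I"
  shows "order c (\<Prod>i\<in>I. [:- s i, 1:]) = card {i\<in>I. s i = c}"
  using assms
proof (induct I rule: finite_induct)
  case empty
  then show ?case
    by (simp add: order_0I)
next
  case (insert x F)
  have "(\<Prod>i\<in>F. [:- s i, 1:]) \<noteq> 0"
    using insert(1) by simp
  then have "[:- s x, 1:] * (\<Prod>i\<in>F. [:- s i, 1:]) \<noteq> 0"
    by (metis mult_eq_0_iff pCons_eq_0_iff one_neq_zero)
  then have "order c (\<Prod>i\<in>insert x F. [:- s i, 1:]) = order c [:- s x, 1:] + card {i\<in>F. s i = c}"
    unfolding prod.insert[OF insert(1,2)] insert(3)[symmetric] by (rule order_mult)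
  also have "order c [:- s x, 1:] = (if s x = c then 1 else 0)"
    using order_power_n_n[of c 1] by (auto simp: order_0I)
  also have "(if s x = c then 1 else 0) + card {i\<in>F. s i = c} = card {i\<in>insert x F. s i = c}"
  proof (cases "s x = c")
    case True
    then have "{i\<in>insert x F. s i = c} = insert x {i\<in>F. s i = c}"
      by auto
    then show ?thesis
      using True insert(1,2) by simp
  next
    case False
    then have "{i\<in>insert x F. s i = c} = {i\<in>F. s i = c}"
      by auto
    then show ?thesis
      using False by simp
  qed
  finally show ?case .
qed

lemma alg_mult_unitary_triangular:
  fixes A :: "((complex, 'n::{finite,linorder}) vec, 'n) vec"
  assumes "unitary Q" "upper_triangular (conj_transpose Q ** A ** Q)"
  shows "alg_mult A c = card {i. (conj_transpose Q ** A ** Q)$i$i = c}"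
proof -
  let ?S = "conj_transpose Q ** A ** Q"
  have "charpoly A = charpoly ?S"
    using unitary_right_inverse[OF unitary_conj_transpose[OF assms(1)]]
    by (simp add: charpoly_similar)
  also have "\<dots> = (\<Prod>i\<in>UNIV. [:- ?S$i$i, 1:])"
    unfolding charpoly_def using assms(2)
    by (subst det_upper_triangular) (auto simp: upper_triangular_def)
  finally show ?thesis
    by (simp add: alg_mult_def order_prod_linear_factors)
qed

section \<open>Invariance of Lebesgue measure under unitary maps\<close>

lemma linear_measurable_continuous:
  fixes f :: "'a::euclidean_space \<Rightarrow> 'b::euclidean_space"
  assumes "linear f"
  shows "f \<in> borel_measurable borel"
  using assms by (auto intro!: borel_measurable_continuous_onI linear_continuous_on
      simp: linear_conv_bounded_linear)

definition basis_map :: "('a::euclidean_space \<Rightarrow> 'b::real_vector) \<Rightarrow> 'a \<Rightarrow> 'b" where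
  "basis_map h x = (\<Sum>b\<in>Basis. (x \<bullet> b) *\<^sub>R h b)"

lemma linear_basis_map: "linear (basis_map h)"
  by (simp add: basis_map_def linear_iff inner_add_left scaleR_add_left sum.distrib
      scaleR_sum_right)

lemma inner_basis_map_Basis:
  fixes h :: "'a::euclidean_space \<Rightarrow> 'b::euclidean_space"
  assumes bij: "bij_betw h Basis Basis" and b: "b \<in> Basis"
  shows "basis_map h x \<bullet> h b = x \<bullet> b"
proof -
  have "basis_map h x \<bullet> h b = (\<Sum>b'\<in>Basis. (x \<bullet> b') * (h b' \<bullet> h b))"
    by (simp add: basis_map_def inner_sum_left)
  also have "\<dots> = (\<Sum>b'\<in>Basis. if b' = b then x \<bullet> b' else 0)"
    using bij_betw_imp_inj_on[OF bij] bij_betw_apply[OF bij] b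
    by (intro sum.cong refl) (auto simp: inner_Basis inj_on_eq_iff)
  also have "\<dots> = x \<bullet> b"
    using b by simp
  finally show ?thesis .
qed

lemma inner_basis_map:
  fixes h :: "'a::euclidean_space \<Rightarrow> 'b::euclidean_space"
  assumes "bij_betw h Basis Basis"
  shows "basis_map h x \<bullet> basis_map h y = x \<bullet> y"
proof -
  have "basis_map h x \<bullet> basis_map h y = (\<Sum>b\<in>Basis. (y \<bullet> b) * (basis_map h x \<bullet> h b))"
    by (simp add: basis_map_def[of h y] inner_sum_right)
  also have "\<dots> = (\<Sum>b\<in>Basis. (x \<bullet> b) * (y \<bullet> b))"
    using assms by (intro sum.cong refl) (simp add: inner_basis_map_Basis)
  also have "\<dots> = x \<bullet> y"
    by (rule euclidean_inner[symmetric])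
  finally show ?thesis .
qed

lemma basis_map_inv_into:
  fixes h :: "'a::euclidean_space \<Rightarrow> 'b::euclidean_space"
  assumes bij: "bij_betw h Basis Basis"
  shows "basis_map (inv_into Basis h) (basis_map h x) = x"
proof (rule euclidean_eqI)
  fix b :: 'a assume b: "b \<in> Basis"
  have "h b \<in> Basis" "inv_into Basis h (h b) = b"
    using bij b by (auto simp: bij_betw_def)
  then have "basis_map (inv_into Basis h) (basis_map h x) \<bullet> b = basis_map h x \<bullet> h b"
    using inner_basis_map_Basis[OF bij_betw_inv_into[OF bij], of "h b"] by simp
  also have "\<dots> = x \<bullet> b"
    by (rule inner_basis_map_Basis[OF bij b])
  finally show "basis_map (inv_into Basis h) (basis_map h x) \<bullet> b = x \<bullet> b" .
qed

lemma distr_lborel_basis_map: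
  fixes h :: "'a::euclidean_space \<Rightarrow> 'b::euclidean_space"
  assumes bij: "bij_betw h Basis Basis"
  shows "distr lborel borel (basis_map h) = lborel"
proof (rule lborel_eqI[symmetric])
  show "sets (distr lborel borel (basis_map h)) = sets borel"
    by simp
  fix l u :: 'b assume lu: "\<And>b. b \<in> Basis \<Longrightarrow> l \<bullet> b \<le> u \<bullet> b"
  define l' u' where "l' = (\<Sum>b\<in>(Basis::'a set). (l \<bullet> h b) *\<^sub>R b)"
    and "u' = (\<Sum>b\<in>(Basis::'a set). (u \<bullet> h b) *\<^sub>R b)"
  have l'u': "l' \<bullet> b = l \<bullet> h b" "u' \<bullet> b = u \<bullet> h b" if "b \<in> Basis" for b
    using that by (simp_all add: l'_def u'_def inner_sum_left inner_Basis if_distrib cong: if_cong)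
  have hB: "h b \<in> Basis" if "b \<in> Basis" for b
    using bij that by (auto simp: bij_betw_def)
  have "basis_map h x \<in> box l u \<longleftrightarrow> x \<in> box l' u'" for x
  proof -
    have "basis_map h x \<in> box l u \<longleftrightarrow>
        (\<forall>b\<in>Basis. l \<bullet> h b < basis_map h x \<bullet> h b \<and> basis_map h x \<bullet> h b < u \<bullet> h b)"
      unfolding mem_box using bij by (metis (no_types, lifting) bij_betw_def imageE image_eqI)
    also have "\<dots> \<longleftrightarrow> x \<in> box l' u'"
      by (simp add: mem_box inner_basis_map_Basis[OF bij] l'u')
    finally show ?thesis .
  qed
  then have "basis_map h -` box l u = box l' u'"
    by auto
  then have "emeasure (distr lborel borel (basis_map h)) (box l u) = emeasure lborel (box l' u')"
    using linear_measurable_continuous[OF linear_basis_map] by (subst emeasure_distr) auto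
  also have "\<dots> = ennreal (\<Prod>b\<in>Basis. (u - l) \<bullet> h b)"
    using lu hB by (subst emeasure_lborel_box) (auto simp: l'u' inner_diff_left intro!: prod.cong)
  also have "(\<Prod>b\<in>Basis. (u - l) \<bullet> h b) = (\<Prod>b\<in>Basis. (u - l) \<bullet> b)"
    by (rule prod.reindex_bij_betw[OF bij])
  finally show "emeasure (distr lborel borel (basis_map h)) (box l u) = ennreal (\<Prod>b\<in>Basis. (u - l) \<bullet> b)" .
qed

lemma distr_lborel_orthogonal_transformation_cart:
  fixes L :: "(real, 'm::{finite,wellorder}) vec \<Rightarrow> (real, 'm) vec"
  assumes L: "orthogonal_transformation L"
  shows "distr lborel borel L = lborel"
proof (rule lborel_eqI[symmetric])
  show "sets (distr lborel borel L) = sets borel"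
    by simp
  fix l u :: "(real, 'm) vec" assume lu: "\<And>b. b \<in> Basis \<Longrightarrow> l \<bullet> b \<le> u \<bullet> b"
  let ?B = "box l u"
  have L': "orthogonal_transformation (inv L)"
    by (rule orthogonal_transformation_inv[OF L])
  have pre: "L -` ?B = inv L ` ?B"
    by (rule bij_vimage_eq_inv_image[OF orthogonal_transformation_bij[OF L]])
  have meas: "L \<in> borel_measurable borel"
    by (rule linear_measurable_continuous[OF orthogonal_transformation_linear[OF L]])
  have "bounded (inv L ` ?B)"
    using orthogonal_transformation_linear[OF L']
    by (intro bounded_linear_image) (auto simp: linear_conv_bounded_linear)
  then have fin: "emeasure lborel (inv L ` ?B) < \<infinity>"
    by (rule emeasure_bounded_finite)
  have "measure lborel (inv L ` ?B) = measure lebesgue (inv L ` ?B)"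
    using meas pre by (metis borel_open measurable_sets_borel open_box measure_completion
        sets_lborel)
  also have "\<dots> = measure lebesgue ?B"
    by (rule measure_orthogonal_image[OF L' lmeasurable_open]) auto
  also have "\<dots> = measure lborel ?B"
    by simp
  finally have "measure lborel (inv L ` ?B) = measure lborel ?B" .
  then have "emeasure lborel (inv L ` ?B) = emeasure lborel ?B"
    using fin emeasure_bounded_finite[of ?B] by (simp add: emeasure_eq_ennreal_measure)
  then have "emeasure (distr lborel borel L) ?B = emeasure lborel ?B"
    using meas pre by (subst emeasure_distr) auto
  also have "\<dots> = ennreal (\<Prod>b\<in>Basis. (u - l) \<bullet> b)"
    by (rule emeasure_lborel_box[OF lu])
  finally show "emeasure (distr lborel borel L) ?B = ennreal (\<Prod>b\<in>Basis. (u - l) \<bullet> b)" .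
qed

text \<open>Library results on Lebesgue measure under linear maps are stated for \<open>real^'m\<close>; the
  type \<open>'m\<close> only serves to transport them to \<open>'a\<close> along a bijection of the bases.\<close>

lemma distr_lborel_orthogonal_transformation:
  fixes T :: "'a::euclidean_space \<Rightarrow> 'a"
  assumes T: "orthogonal_transformation T" and dim: "DIM('a) = CARD('m::{finite,wellorder})"
  shows "distr lborel borel T = lborel"
proof -
  have "card (Basis :: 'a set) = card (Basis :: (real, 'm) vec set)"
    using dim by simp
  then obtain h :: "'a \<Rightarrow> (real, 'm) vec" where h: "bij_betw h Basis Basis"
    by (metis finite_Basis finite_same_card_bij)
  define E E' where "E = basis_map h" and "E' = basis_map (inv_into Basis h)"
  have h': "bij_betw (inv_into Basis h) Basis Basis"
    by (rule bij_betw_inv_into[OF h])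
  define L where "L = E \<circ> T \<circ> E'"
  have "orthogonal_transformation L"
    unfolding orthogonal_transformation_def L_def E_def E'_def
    using T
    by (auto intro!: linear_compose linear_basis_map simp: inner_basis_map[OF h] inner_basis_map[OF h']
        orthogonal_transformation_def)
  then have dL: "distr lborel borel L = lborel"
    by (rule distr_lborel_orthogonal_transformation_cart)
  have dE': "distr lborel borel E' = lborel"
    unfolding E'_def by (rule distr_lborel_basis_map[OF h'])
  have T_E': "T \<circ> E' = E' \<circ> L"
    by (simp add: fun_eq_iff L_def E_def E'_def basis_map_inv_into[OF h])
  note meas = linear_measurable_continuous
  have mT: "T \<in> borel_measurable borel"
    by (rule meas[OF orthogonal_transformation_linear[OF T]])
  have mE': "E' \<in> borel_measurable borel" and mL: "L \<in> borel_measurable borel"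
    using \<open>orthogonal_transformation L\<close> by (auto simp: E'_def linear_basis_map
        orthogonal_transformation_linear intro!: meas)
  have "distr lborel borel T = distr (distr lborel borel E') borel T"
    by (simp add: dE')
  also have "\<dots> = distr lborel borel (E' \<circ> L)"
    using mT mE' by (simp add: distr_distr T_E')
  also have "\<dots> = distr (distr lborel borel L) borel E'"
    using mL mE' by (simp add: distr_distr)
  also have "\<dots> = lborel"
    by (simp add: dL dE')
  finally show ?thesis .
qed

lemma orthogonal_transformation_unitary:
  "unitary Q \<Longrightarrow> orthogonal_transformation (\<lambda>z::complex^'n::finite. Q *v z)"
  by (simp add: orthogonal_transformation_def inner_vec_complex cinner_matrix_vector_mult
      matrix_vector_mul_assoc unitary_def)

lemma distr_lborel_unitary:
  fixes Q :: "complex^'n::finite^'n"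
  assumes "unitary Q"
  shows "distr lborel borel (\<lambda>z. Q *v z) = lborel"
  by (rule distr_lborel_orthogonal_transformation[where 'm = "'n bit0"])
    (simp_all add: orthogonal_transformation_unitary[OF assms])

section \<open>Unitary composition operators on the Fock space\<close>

lemma entire_fun_comp_matrix:
  fixes M :: "complex^'n::finite^'n"
  assumes "entire_fun f"
  shows "entire_fun (\<lambda>z. f (M *v z))"
  unfolding entire_fun_def
proof
  fix z
  obtain g :: "complex^'n" where g: "(f has_derivative (\<lambda>h. \<Sum>i\<in>UNIV. g$i * h$i)) (at (M *v z))"
    using assms unfolding entire_fun_def by blast
  have "((\<lambda>z. f (M *v z)) has_derivative (\<lambda>h. \<Sum>i\<in>UNIV. g$i * (M *v h)$i)) (at z)"
    by (rule has_derivative_compose[OF linear_imp_has_derivative[OF matrix_vector_mul_linear] g])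
  moreover have "(\<Sum>i\<in>UNIV. g$i * (M *v h)$i) = (\<Sum>j\<in>UNIV. (g v* M)$j * h$j)" for h
  proof -
    have "(\<Sum>i\<in>UNIV. g$i * (M *v h)$i) = (\<Sum>i\<in>UNIV. \<Sum>j\<in>UNIV. g$i * M$i$j * h$j)"
      by (simp add: matrix_vector_mult_def sum_distrib_left mult.assoc)
    also have "\<dots> = (\<Sum>j\<in>UNIV. \<Sum>i\<in>UNIV. g$i * M$i$j * h$j)"
      by (rule sum.swap)
    also have "\<dots> = (\<Sum>j\<in>UNIV. (g v* M)$j * h$j)"
      by (simp add: vector_matrix_mult_def sum_distrib_right)
    finally show ?thesis .
  qed
  ultimately show "\<exists>g'::complex^'n. ((\<lambda>z. f (M *v z)) has_derivative (\<lambda>h. \<Sum>i\<in>UNIV. g'$i * h$i)) (at z)"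
    by auto
qed

lemma fock_comp_unitary:
  fixes Q :: "complex^'n::finite^'n"
  assumes Q: "unitary Q" and f: "f \<in> fock"
  shows "(\<lambda>z. f (Q *v z)) \<in> fock" "fock_norm (\<lambda>z. f (Q *v z)) = fock_norm f"
proof -
  define G where "G z = (cmod (f z))\<^sup>2 * exp (- ((norm z)\<^sup>2 / 2))" for z :: "complex^'n"
  have G_Q: "(cmod (f (Q *v z)))\<^sup>2 * exp (- ((norm z)\<^sup>2 / 2)) = G (Q *v z)" for z
    by (simp add: G_def norm_unitary_mult[OF Q])
  have mQ: "(\<lambda>z. Q *v z) \<in> lborel \<rightarrow>\<^sub>M borel"
    using linear_measurable_continuous[of "\<lambda>z. Q *v z"] by simp
  have int: "integrable lborel G"
    using f by (simp add: fock_def G_def[abs_def])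
  then have mG: "G \<in> borel_measurable borel"
    using borel_measurable_integrable[OF int] by simp
  have "integrable lborel (\<lambda>z. G (Q *v z))"
    using int integrable_distr_eq[OF mQ mG] distr_lborel_unitary[OF Q] by simp
  moreover have "entire_fun (\<lambda>z. f (Q *v z))"
    using f entire_fun_comp_matrix[of f Q] by (simp add: fock_def)
  ultimately show "(\<lambda>z. f (Q *v z)) \<in> fock"
    by (simp add: fock_def G_Q)
  have "(\<integral>z. G (Q *v z) \<partial>lborel) = (\<integral>z. G z \<partial>lborel)"
    using integral_distr[OF mQ mG] distr_lborel_unitary[OF Q] by simp
  then show "fock_norm (\<lambda>z. f (Q *v z)) = fock_norm f"
    unfolding fock_norm_def G_Q by (simp add: G_def[abs_def])
qed

lemma bounded_fock_op_comp_unitary: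
  assumes "unitary Q"
  shows "bounded_fock_op (comp_op (\<lambda>z. Q *v z))"
  unfolding bounded_fock_op_def
  using fock_comp_unitary[OF assms]
  by (intro conjI ballI allI exI[of _ 1]) (simp_all add: comp_op_def o_def)

lemma comp_op_unitary_similar:
  assumes "unitary Q"
  shows "comp_op (\<lambda>z. Q *v z) (comp_op (\<lambda>z. A *v z + b) f) =
    comp_op (\<lambda>z. (conj_transpose Q ** A ** Q) *v z + conj_transpose Q *v b) (comp_op (\<lambda>z. Q *v z) f)"
    and "comp_op (\<lambda>z. conj_transpose Q *v z) (comp_op (\<lambda>z. Q *v z) f) = f"
    and "comp_op (\<lambda>z. Q *v z) (comp_op (\<lambda>z. conj_transpose Q *v z) f) = f"
  using unitary_right_inverse[OF assms] assms
  by (simp_all add: comp_op_def o_def matrix_vector_right_distrib matrix_vector_mul_assoc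
      matrix_mul_assoc unitary_def)

section \<open>Reproducing kernels and the necessity of contractivity\<close>

lemma nn_integral_gaussian_1:
  "(\<integral>\<^sup>+x. ennreal (exp (- x\<^sup>2 / 2)) \<partial>lborel) = ennreal (sqrt (2 * pi))"
proof -
  have "ennreal (exp (- x\<^sup>2 / 2)) = ennreal (sqrt (2 * pi)) * ennreal (normal_density 0 1 x)" for x
    by (subst ennreal_mult[symmetric]) (auto simp: normal_density_def)
  then have "(\<integral>\<^sup>+x. ennreal (exp (- x\<^sup>2 / 2)) \<partial>lborel) =
      ennreal (sqrt (2 * pi)) * (\<integral>\<^sup>+x. ennreal (normal_density 0 1 x) \<partial>lborel)"
    by (simp only:) (rule nn_integral_cmult, measurable)
  also have "(\<integral>\<^sup>+x. ennreal (normal_density 0 1 x) \<partial>lborel) = ennreal (\<integral>x. normal_density 0 1 x \<partial>lborel)"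
    by (rule nn_integral_eq_integral) auto
  finally show ?thesis
    by simp
qed

lemma nn_integral_gaussian:
  "(\<integral>\<^sup>+z. ennreal (exp (- (norm z)\<^sup>2 / 2)) \<partial>(lborel :: 'a::euclidean_space measure)) =
    ennreal (sqrt (2 * pi) ^ DIM('a))"
proof -
  have "ennreal (exp (- (norm z)\<^sup>2 / 2)) = (\<Prod>b\<in>Basis. ennreal (exp (- (z \<bullet> b)\<^sup>2 / 2)))" for z :: 'a
  proof -
    have "(norm z)\<^sup>2 = (\<Sum>b\<in>Basis. (z \<bullet> b)\<^sup>2)"
      unfolding power2_norm_eq_inner by (subst euclidean_inner) (simp add: power2_eq_square)
    then have "exp (- (norm z)\<^sup>2 / 2) = exp (\<Sum>b\<in>Basis. - (z \<bullet> b)\<^sup>2 / 2)"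
      by (simp add: sum_negf sum_divide_distrib)
    also have "\<dots> = (\<Prod>b\<in>Basis. exp (- (z \<bullet> b)\<^sup>2 / 2))"
      by (simp add: exp_sum)
    finally show ?thesis
      by (simp add: prod_ennreal)
  qed
  then have "(\<integral>\<^sup>+z. ennreal (exp (- (norm z)\<^sup>2 / 2)) \<partial>(lborel :: 'a measure)) =
      (\<integral>\<^sup>+z. (\<Prod>b\<in>Basis. ennreal (exp (- (z \<bullet> b)\<^sup>2 / 2))) \<partial>(lborel :: 'a measure))"
    by (simp only:)
  also have "\<dots> = (\<Prod>b\<in>(Basis :: 'a set). \<integral>\<^sup>+x. ennreal (exp (- x\<^sup>2 / 2)) \<partial>lborel)"
    using nn_integral_lborel_prod[of "\<lambda>b x. ennreal (exp (- x\<^sup>2 / 2))"] by simp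
  also have "\<dots> = ennreal (sqrt (2 * pi) ^ DIM('a))"
    by (simp only: nn_integral_gaussian_1) (simp add: ennreal_power)
  finally show ?thesis .
qed

lemma has_bochner_integral_gaussian_shift:
  fixes w :: "'a::euclidean_space"
  shows "has_bochner_integral lborel (\<lambda>z. exp (- (norm (z - w))\<^sup>2 / 2)) (sqrt (2 * pi) ^ DIM('a))"
proof (rule has_bochner_integral_nn_integral)
  let ?g = "\<lambda>z::'a. ennreal (exp (- (norm z)\<^sup>2 / 2))"
  have "(\<integral>\<^sup>+z. ?g (z - w) \<partial>lborel) = (\<integral>\<^sup>+z. ?g z \<partial>distr lborel borel ((+) (- w)))"
    by (subst nn_integral_distr) simp_all
  also have "\<dots> = ennreal (sqrt (2 * pi) ^ DIM('a))"
    unfolding lborel_distr_plus by (rule nn_integral_gaussian)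
  finally show "(\<integral>\<^sup>+z. ennreal (exp (- (norm (z - w))\<^sup>2 / 2)) \<partial>lborel) = ennreal (sqrt (2 * pi) ^ DIM('a))" .
qed simp_all

definition fock_kernel :: "complex^'n::finite \<Rightarrow> complex^'n \<Rightarrow> complex" where
  "fock_kernel w z = exp (cinner z w / 2)"

lemma fock_kernel_weight:
  "(cmod (fock_kernel w z))\<^sup>2 * exp (- ((norm z)\<^sup>2 / 2)) =
    exp ((norm w)\<^sup>2 / 2) * exp (- (norm (z - w))\<^sup>2 / 2)"
proof -
  have "(norm (z - w))\<^sup>2 = (norm z)\<^sup>2 - 2 * (z \<bullet> w) + (norm w)\<^sup>2"
    by (simp add: power2_norm_eq_inner inner_diff_left inner_diff_right inner_commute)
  moreover have "cmod (fock_kernel w z) = exp ((z \<bullet> w) / 2)"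
    by (simp add: fock_kernel_def inner_vec_complex)
  ultimately show ?thesis
    by (simp add: power2_eq_square exp_add[symmetric] field_simps)
qed

lemma fock_kernel_entire: "entire_fun (fock_kernel (w::complex^'n::finite))"
  unfolding entire_fun_def
proof
  fix z :: "complex^'n"
  define u where "u z = cinner z w / 2" for z :: "complex^'n"
  have "linear u"
    by (simp add: u_def linear_iff cinner_add_left cinner_scaleR_left add_divide_distrib)
      (simp add: scaleR_conv_of_real)
  then have deriv: "((\<lambda>z. exp (u z)) has_derivative (\<lambda>h. exp (u z) * u h)) (at z)"
    by (rule has_derivative_compose[OF linear_imp_has_derivative
          has_field_derivative_imp_has_derivative[OF DERIV_exp]])
  define g where "g = (\<chi> i. exp (u z) * cnj (w$i) / 2)"
  have "(\<lambda>h. exp (u z) * u h) = (\<lambda>h. \<Sum>i\<in>UNIV. g$i * h$i)"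
    by (simp add: fun_eq_iff g_def u_def cinner_def sum_distrib_right sum_divide_distrib mult_ac)
  moreover have "fock_kernel w = (\<lambda>z. exp (u z))"
    by (simp add: fun_eq_iff fock_kernel_def u_def)
  ultimately show "\<exists>g::complex^'n. (fock_kernel w has_derivative (\<lambda>h. \<Sum>i\<in>UNIV. g$i * h$i)) (at z)"
    using deriv by auto
qed

lemma fock_kernel_in_fock: "fock_kernel w \<in> fock"
  using has_bochner_integral_gaussian_shift[of w]
  by (simp add: fock_def fock_kernel_entire fock_kernel_weight has_bochner_integral_iff)

lemma fock_norm_fock_kernel: "fock_norm (fock_kernel (w::complex^'n::finite)) = exp ((norm w)\<^sup>2 / 4)"
proof -
  have "sqrt (2 * pi) ^ DIM(complex^'n) = (2 * pi) ^ CARD('n)"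
    unfolding DIM_cart DIM_complex mult.commute[of "CARD('n)" 2] power_mult by simp
  then have "(1 / (2 * pi)) ^ CARD('n) * sqrt (2 * pi) ^ DIM(complex^'n) = 1"
    by (simp add: power_divide)
  then have "fock_norm (fock_kernel w) = sqrt (exp ((norm w)\<^sup>2 / 2))"
    using has_bochner_integral_gaussian_shift[of w]
    by (simp add: fock_norm_def fock_kernel_weight has_bochner_integral_iff mult.assoc
        mult.left_commute[of "exp _"])
  also have "\<dots> = exp ((norm w)\<^sup>2 / 4)"
    by (rule real_sqrt_unique) (simp_all add: power2_eq_square exp_add[symmetric])
  finally show ?thesis .
qed

lemma fock_norm_mult: "fock_norm (\<lambda>z. c * f z) = cmod c * fock_norm f"
proof -
  have "(\<lambda>z. (cmod (c * f z))\<^sup>2 * exp (- ((norm z)\<^sup>2 / 2))) =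
      (\<lambda>z. (cmod c)\<^sup>2 * ((cmod (f z))\<^sup>2 * exp (- ((norm z)\<^sup>2 / 2))))"
    by (simp add: fun_eq_iff norm_mult power_mult_distrib)
  then show ?thesis
    unfolding fock_norm_def by (simp add: real_sqrt_mult mult_ac)
qed

lemma comp_op_affine_fock_kernel:
  "comp_op (\<lambda>z. A *v z + b) (fock_kernel w) =
    (\<lambda>z. exp (cinner b w / 2) * fock_kernel (conj_transpose A *v w) z)"
  by (simp add: fun_eq_iff comp_op_def fock_kernel_def cinner_add_left cinner_matrix_vector_mult
      add_divide_distrib exp_add mult.commute)

lemma quadratic_bounded_above:
  fixes a d M :: real
  assumes "\<And>t. t * a + t\<^sup>2 * d \<le> M"
  shows "d \<le> 0" and "d = 0 \<Longrightarrow> a = 0"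
proof -
  show "d \<le> 0"
  proof (rule ccontr)
    assume "\<not> d \<le> 0"
    then have d: "d > 0"
      by simp
    define t where "t = max 1 ((\<bar>a\<bar> + \<bar>M\<bar> + 1) / d)"
    have t1: "1 \<le> t"
      by (simp add: t_def)
    have "(\<bar>a\<bar> + \<bar>M\<bar> + 1) / d \<le> t"
      by (simp add: t_def)
    then have "\<bar>a\<bar> + \<bar>M\<bar> + 1 \<le> t * d"
      using d by (simp add: divide_le_eq)
    then have "t * (\<bar>a\<bar> + \<bar>M\<bar> + 1) \<le> t\<^sup>2 * d"
      using t1 mult_left_mono[of _ _ t] by (fastforce simp: power2_eq_square mult_ac)
    moreover have "0 \<le> t * (a + \<bar>a\<bar>)"
      using t1 by (intro mult_nonneg_nonneg) auto
    then have "- (t * \<bar>a\<bar>) \<le> t * a"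
      by (simp add: algebra_simps)
    moreover have "\<bar>M\<bar> + 1 \<le> t * (\<bar>M\<bar> + 1)"
      using t1 by (simp add: mult_le_cancel_right1)
    ultimately have "\<bar>M\<bar> + 1 \<le> t * a + t\<^sup>2 * d"
      by (simp add: algebra_simps)
    then show False
      using assms[of t] by simp
  qed
  show "a = 0" if "d = 0"
  proof (rule ccontr)
    assume "a \<noteq> 0"
    then show False
      using assms[of "(\<bar>M\<bar> + 1) / a"] that by simp
  qed
qed

lemma bounded_affine_comp_op_kernel_bound:
  fixes A :: "complex^'n::finite^'n"
  assumes "bounded_fock_op (comp_op (\<lambda>z. A *v z + b))"
  obtains M where "\<And>w. 2 * Re (cinner b w) + ((norm (conj_transpose A *v w))\<^sup>2 - (norm w)\<^sup>2) \<le> M"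
proof -
  obtain K where K: "\<And>f. f \<in> fock \<Longrightarrow> fock_norm (comp_op (\<lambda>z. A *v z + b) f) \<le> K * fock_norm f"
    using assms unfolding bounded_fock_op_def by blast
  have est: "exp (Re (cinner b w) / 2) * exp ((norm (conj_transpose A *v w))\<^sup>2 / 4)
      \<le> K * exp ((norm w)\<^sup>2 / 4)" for w
    using K[OF fock_kernel_in_fock[of w]]
    by (simp add: comp_op_affine_fock_kernel fock_norm_mult fock_norm_fock_kernel)
  have "exp (Re (cinner b 0) / 2) \<le> K"
    using est[of 0] by simp
  then have "0 < K"
    by (rule less_le_trans[OF exp_gt_zero])
  have "2 * Re (cinner b w) + ((norm (conj_transpose A *v w))\<^sup>2 - (norm w)\<^sup>2) \<le> 4 * ln K" for w
  proof -
    have "exp (Re (cinner b w) / 2 + (norm (conj_transpose A *v w))\<^sup>2 / 4) \<le> exp (ln K + (norm w)\<^sup>2 / 4)"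
      using est[of w] \<open>0 < K\<close> by (simp add: exp_add)
    then show ?thesis
      by simp
  qed
  then show ?thesis
    by (rule that)
qed

text \<open>Replacing \<open>w\<close> by real multiples \<open>t w\<close> in the kernel bound gives a quadratic inequality
  in \<open>t\<close>.\<close>

lemma bounded_affine_comp_op_imp:
  fixes A :: "complex^'n::finite^'n"
  assumes "bounded_fock_op (comp_op (\<lambda>z. A *v z + b))"
  shows "contractive A"
    and "\<And>w. norm (conj_transpose A *v w) = norm w \<Longrightarrow> cinner b w = 0"
proof -
  obtain M where H: "\<And>w. 2 * Re (cinner b w) + ((norm (conj_transpose A *v w))\<^sup>2 - (norm w)\<^sup>2) \<le> M"
    using bounded_affine_comp_op_kernel_bound[OF assms] by blast
  have quad: "t * (2 * Re (cinner b w)) + t\<^sup>2 * ((norm (conj_transpose A *v w))\<^sup>2 - (norm w)\<^sup>2) \<le> M"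
    for t w
  proof -
    have "Re (cinner b (complex_of_real t *s w)) = t * Re (cinner b w)"
      by (simp add: cinner_scale_right)
    moreover have "norm (conj_transpose A *v (complex_of_real t *s w)) = \<bar>t\<bar> * norm (conj_transpose A *v w)"
      by (simp add: vec.scale norm_vector_smult_complex)
    moreover have "norm (complex_of_real t *s w) = \<bar>t\<bar> * norm w"
      by (simp add: norm_vector_smult_complex)
    ultimately show ?thesis
      using H[of "complex_of_real t *s w"] by (simp add: algebra_simps)
  qed
  have "norm (conj_transpose A *v w) \<le> norm w" for w
    using quadratic_bounded_above(1)[OF quad] by (simp add: power2_le_iff_abs_le[symmetric])
  then show "contractive A"
    using contractive_conj_transpose[of "conj_transpose A"] by (simp add: contractive_def)
  show "cinner b w = 0" if "norm (conj_transpose A *v w) = norm w" for w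
  proof -
    have "Re (cinner b w) = 0"
      using quadratic_bounded_above(2)[OF quad[of _ w]] that by simp
    moreover have "norm (conj_transpose A *v (\<i> *s w)) = norm (\<i> *s w)"
      using that by (simp add: vec.scale norm_vector_smult_complex)
    then have "Re (cinner b (\<i> *s w)) = 0"
      using quadratic_bounded_above(2)[OF quad[of _ "\<i> *s w"]] by simp
    then have "Im (cinner b w) = 0"
      by (simp add: cinner_scale_right)
    ultimately show ?thesis
      by (simp add: complex_eq_iff)
  qed
qed

theorem mainTheorem2:
  fixes A :: "((complex, 'n::{finite,linorder}) vec, 'n) vec" and b :: "(complex, 'n) vec"
  assumes "bounded_fock_op (comp_op (\<lambda>z. A *v z + b))"
  shows "\<exists>(S :: ((complex, 'n) vec, 'n) vec) (v :: (complex, 'n) vec) (P :: 'n set) X Y.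
     (\<forall>i\<in>P. \<forall>j. j \<notin> P \<longrightarrow> i < j) \<and>
     (\<forall>i j. (i \<in> P \<and> j \<notin> P) \<or> (i \<notin> P \<and> j \<in> P) \<longrightarrow> S$i$j = 0) \<and>
     (\<forall>i\<in>P. \<forall>j\<in>P. j < i \<longrightarrow> S$i$j = 0) \<and>
     (\<forall>i\<in>P. cmod (S$i$i) < 1) \<and>
     (\<forall>c. cmod c < 1 \<longrightarrow> card {i\<in>P. S$i$i = c} = alg_mult A c) \<and>
     (\<forall>i j. i \<notin> P \<and> j \<notin> P \<and> i \<noteq> j \<longrightarrow> S$i$j = 0) \<and>
     (\<forall>i. i \<notin> P \<longrightarrow> cmod (S$i$i) = 1) \<and>
     (\<forall>c. cmod c = 1 \<longrightarrow> card {i. i \<notin> P \<and> S$i$i = c} = alg_mult A c) \<and>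
     (\<forall>i. i \<notin> P \<longrightarrow> v$i = 0) \<and>
     bounded_fock_op X \<and> bounded_fock_op Y \<and>
     (\<forall>f\<in>fock. Y (X f) = f \<and> X (Y f) = f) \<and>
     (\<forall>f\<in>fock. X (comp_op (\<lambda>z. A *v z + b) f) = comp_op (\<lambda>z. S *v z + v) (X f))"
proof -
  note A = bounded_affine_comp_op_imp[OF assms]
  obtain Q P where Q: "unitary Q" and tri: "upper_triangular (conj_transpose Q ** A ** Q)"
    and P: "\<And>i j. i \<in> P \<Longrightarrow> j \<notin> P \<Longrightarrow> i < j"
    and unimodular: "\<And>i. i \<notin> P \<longleftrightarrow> cmod ((conj_transpose Q ** A ** Q)$i$i) = 1"
    using block_schur_decomposition[OF A(1)] by blast
  define S where "S = conj_transpose Q ** A ** Q"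
  have S: "contractive S"
    unfolding S_def by (rule contractive_unitary_similar[OF A(1) Q])
  have in_P: "i \<in> P \<longleftrightarrow> cmod (S$i$i) < 1" for i
    using unimodular[of i] contractive_diagonal_le[OF S, of i] by (auto simp: S_def)
  have off_diagonal: "S$i$j = 0" if "i \<notin> P \<or> j \<notin> P" "i \<noteq> j" for i j
    using contractive_unimodular_diagonal[OF S] unimodular that by (metis S_def)
  have alg_mult: "alg_mult A c = card {i. S$i$i = c}" for c
    unfolding S_def by (rule alg_mult_unitary_triangular[OF Q tri])
  have "\<forall>i\<in>P. \<forall>j. j \<notin> P \<longrightarrow> i < j"
    using P by blast
  moreover have "\<forall>i j. (i \<in> P \<and> j \<notin> P) \<or> (i \<notin> P \<and> j \<in> P) \<longrightarrow> S$i$j = 0"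
    by (auto intro: off_diagonal)
  moreover have "\<forall>i\<in>P. \<forall>j\<in>P. j < i \<longrightarrow> S$i$j = 0"
    using tri by (simp add: S_def upper_triangular_def)
  moreover have "\<forall>i\<in>P. cmod (S$i$i) < 1"
    using in_P by blast
  moreover have "\<forall>c. cmod c < 1 \<longrightarrow> card {i\<in>P. S$i$i = c} = alg_mult A c"
    unfolding alg_mult by (auto simp: in_P intro!: arg_cong[where f = card])
  moreover have "\<forall>i j. i \<notin> P \<and> j \<notin> P \<and> i \<noteq> j \<longrightarrow> S$i$j = 0"
    using off_diagonal by blast
  moreover have "\<forall>i. i \<notin> P \<longrightarrow> cmod (S$i$i) = 1"
    using unimodular by (simp add: S_def)
  moreover have "\<forall>c. cmod c = 1 \<longrightarrow> card {i. i \<notin> P \<and> S$i$i = c} = alg_mult A c"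
    unfolding alg_mult by (auto simp: in_P intro!: arg_cong[where f = card])
  moreover have "\<forall>i. i \<notin> P \<longrightarrow> (conj_transpose Q *v b)$i = 0"
    using unitary_similar_translation_component[OF Q A] unimodular by blast
  moreover have "\<forall>f\<in>fock. comp_op (\<lambda>z. Q *v z) (comp_op (\<lambda>z. A *v z + b) f) =
      comp_op (\<lambda>z. S *v z + conj_transpose Q *v b) (comp_op (\<lambda>z. Q *v z) f)"
    using comp_op_unitary_similar(1)[OF Q] by (simp add: S_def)
  ultimately show ?thesis
    using bounded_fock_op_comp_unitary[OF Q] bounded_fock_op_comp_unitary[OF unitary_conj_transpose[OF Q]]
      comp_op_unitary_similar(2,3)[OF Q]
    by - (intro exI[of _ S] exI[of _ "conj_transpose Q *v b"] exI[of _ P]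
        exI[of _ "comp_op (\<lambda>z. Q *v z)"] exI[of _ "comp_op (\<lambda>z. conj_transpose Q *v z)"] conjI;
        (assumption | simp))
qed

end
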